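(* Let $n=2k$ with $k\ge1$, and let $$W(X_1,\dots,X_n)=\sum_{j=1}^nX_j+\sum_{j=1}^n\frac1{X_j}+\prod_{j=1}^nX_j$$ on $(\mathbb{C}^* )^n$. Then every critical point of $W$ in $(\mathbb{C}^* )^n$ is non-degenerate, i.e. the Hessian matrix $(\partial^2W/\partial X_j\partial X_k)$ is invertible at every point where $\nabla W=0$.
   Context: $W$ is the superpotential $\sum_{v\in\mathrm{vert}(P)}x^v$ of the pseudo del Pezzo polytope $P^k_{pdP}\subset\mathbb{R}^{2k}$. This polytope is the convex hull of $\pm e_1,\dots,\pm e_{2k}$ and $e_1+\dots+e_{2k}$, and it is the polytope associated with the pseudo del Pezzo toric variety $U_k$. *)

theory Defs
  imports "HOL-Analysis.Analysis"
begin

definition W :: "complex^'n \<Rightarrow> complex" where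
  "W X = (\<Sum>j\<in>UNIV. X$j) + (\<Sum>j\<in>UNIV. 1 / X$j) + (\<Prod>j\<in>UNIV. X$j)"

definition partial :: "'n \<Rightarrow> (complex^'n \<Rightarrow> complex) \<Rightarrow> complex^'n \<Rightarrow> complex" where
  "partial j f X = deriv (\<lambda>t. f (\<chi> i. if i = j then t else X$i)) (X$j)"

definition hessian :: "(complex^'n \<Rightarrow> complex) \<Rightarrow> complex^'n \<Rightarrow> complex^'n^'n" where
  "hessian f X = (\<chi> j l. partial j (partial l f) X)"

end

theory Submission
  imports Defs
begin

(*
  Write P = prod_j X_j and y_j = 2 X_j + P.  At a critical point every coordinate
  solves X_j^2 + P X_j - 1 = 0, and the Hessian there has the shape
      H = diag(y_j / X_j^2) + P w w^T,     w_j = 1 / X_j,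
  a rank-one update of a diagonal matrix.  Such a matrix is invertible as soon as
  the diagonal is invertible and 1 + P * sum_j w_j^2 / (y_j / X_j^2) =
  1 + P * sum_j 1/y_j is non-zero.
*)

section \<open>Partial derivatives of the superpotential\<close>

definition upd :: "complex^'n \<Rightarrow> 'n \<Rightarrow> complex \<Rightarrow> complex^'n" where
  "upd X j t = (\<chi> i. if i = j then t else X$i)"

lemma upd_nth [simp]: "upd X j t $ i = (if i = j then t else X$i)"
  by (simp add: upd_def)

lemma partial_upd: "partial j f X = deriv (\<lambda>t. f (upd X j t)) (X$j)"
  by (simp add: partial_def upd_def)

lemma sum_upd:
  assumes "finite S" "l \<in> S"
  shows "(\<Sum>i\<in>S. g (upd Z l t $ i)) = g t + (\<Sum>i\<in>S-{l}. g (Z$i))"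
proof -
  have "(\<Sum>i\<in>S. g (upd Z l t $ i)) = g (upd Z l t $ l) + (\<Sum>i\<in>S-{l}. g (upd Z l t $ i))"
    using assms by (rule sum.remove)
  also have "(\<Sum>i\<in>S-{l}. g (upd Z l t $ i)) = (\<Sum>i\<in>S-{l}. g (Z$i))"
    by (rule sum.cong) auto
  finally show ?thesis by simp
qed

lemma prod_upd:
  assumes "finite S" "l \<in> S"
  shows "(\<Prod>i\<in>S. upd Z l t $ i) = t * (\<Prod>i\<in>S-{l}. Z$i)"
proof -
  have "(\<Prod>i\<in>S. upd Z l t $ i) = upd Z l t $ l * (\<Prod>i\<in>S-{l}. upd Z l t $ i)"
    using assms by (rule prod.remove)
  also have "(\<Prod>i\<in>S-{l}. upd Z l t $ i) = (\<Prod>i\<in>S-{l}. Z$i)"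
    by (rule prod.cong) auto
  finally show ?thesis by simp
qed

lemma W_upd:
  "W (upd Z l t) = t + (\<Sum>i\<in>UNIV-{l}. Z$i) + (1/t + (\<Sum>i\<in>UNIV-{l}. 1/Z$i))
     + t * (\<Prod>i\<in>UNIV-{l}. Z$i)"
  unfolding W_def
  using sum_upd[of UNIV l "\<lambda>x. x" Z t] sum_upd[of UNIV l "\<lambda>x. 1/x" Z t] prod_upd[of UNIV l Z t]
  by (simp del: upd_nth)

lemma partial_W:
  assumes "Z$l \<noteq> 0"
  shows "partial l W Z = 1 - 1/(Z$l)^2 + (\<Prod>i\<in>UNIV-{l}. Z$i)"
proof -
  have "((\<lambda>t. W (upd Z l t)) has_field_derivative 1 - 1/(Z$l)^2 + (\<Prod>i\<in>UNIV-{l}. Z$i)) (at (Z$l))"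
    unfolding W_upd using assms
    by (auto intro!: derivative_eq_intros simp: power2_eq_square field_simps)
  then show ?thesis
    unfolding partial_upd by (rule DERIV_imp_deriv)
qed

text \<open>Mixed second derivatives: the term \<open>1 - 1/X_l^2\<close> does not depend on \<open>X_j\<close>,
  and the product is linear in \<open>X_j\<close>.\<close>
lemma hessian_W_offdiag:
  assumes "j \<noteq> l" "X$l \<noteq> 0"
  shows "hessian W X $ j $ l = (\<Prod>i\<in>UNIV-{l}-{j}. X$i)"
proof -
  have line: "partial l W (upd X j t) = 1 - 1/(X$l)^2 + t * (\<Prod>i\<in>UNIV-{l}-{j}. X$i)" for t
    using assms partial_W[of "upd X j t" l] prod_upd[of "UNIV-{l}" j X t] by simp
  have "((\<lambda>t. partial l W (upd X j t)) has_field_derivative (\<Prod>i\<in>UNIV-{l}-{j}. X$i)) (at (X$j))"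
    unfolding line by (auto intro!: derivative_eq_intros)
  then have "partial j (partial l W) X = (\<Prod>i\<in>UNIV-{l}-{j}. X$i)"
    unfolding partial_upd[of j "partial l W" X] by (rule DERIV_imp_deriv)
  then show ?thesis
    unfolding hessian_def by simp
qed

text \<open>Pure second derivatives: only \<open>-1/X_j^2\<close> depends on \<open>X_j\<close>.  The formula for
  \<open>partial j W\<close> is only valid off the hyperplane \<open>X_j = 0\<close>, so the derivative is
  transferred from the open set \<open>-{0}\<close>.\<close>
lemma hessian_W_diag:
  assumes "X$j \<noteq> 0"
  shows "hessian W X $ j $ j = 2/(X$j)^3"
proof -
  let ?R = "\<Prod>i\<in>UNIV-{j}. X$i"
  have line: "1 - 1/t^2 + ?R = partial j W (upd X j t)" if "t \<in> -{0}" for t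
  proof -
    have "(\<Prod>i\<in>UNIV-{j}. upd X j t $ i) = ?R"
      by (rule prod.cong) auto
    then show ?thesis
      using that partial_W[of "upd X j t" j] by simp
  qed
  have "((\<lambda>t. 1 - 1/t^2 + ?R) has_field_derivative 2/(X$j)^3) (at (X$j))"
    using assms by (auto intro!: derivative_eq_intros simp: field_simps eval_nat_numeral)
  then have "((\<lambda>t. partial j W (upd X j t)) has_field_derivative 2/(X$j)^3) (at (X$j))"
    by (rule has_field_derivative_transform_within_open[where S="-{0}"]) (use assms line in auto)
  then have "partial j (partial j W) X = 2/(X$j)^3"
    unfolding partial_upd[of j "partial j W" X] by (rule DERIV_imp_deriv)
  then show ?thesis
    unfolding hessian_def by simp
qed

section \<open>Diagonal matrices with a rank-one update\<close>

text \<open>\<open>diag(d) + c w w^T\<close> is invertible if all \<open>d_j \<noteq> 0\<close> and \<open>1 + c \<Sum> w_j^2/d_j \<noteq> 0\<close>: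
  a kernel vector \<open>v\<close> satisfies \<open>d_j v_j = -c w_j s\<close> with \<open>s = \<Sum> w_j v_j\<close>, whence
  \<open>s (1 + c \<Sum> w_j^2/d_j) = 0\<close>, so \<open>s = 0\<close> and \<open>v = 0\<close>.\<close>
lemma invertible_diagonal_plus_rank_one:
  fixes A :: "'a::field^'n^'n"
  assumes entries: "\<And>j l. A$j$l = (if j = l then d j else 0) + c * w j * w l"
    and d_nz: "\<And>j. d j \<noteq> 0"
    and nondeg: "1 + c * (\<Sum>j\<in>UNIV. (w j)^2 / d j) \<noteq> 0"
  shows "invertible A"
  unfolding invertible_left_inverse matrix_left_invertible_ker
proof (intro allI impI)
  fix v :: "'a^'n"
  assume kernel: "A *v v = 0"
  define s where "s = (\<Sum>l\<in>UNIV. w l * v$l)"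
  have row: "d j * v$j + c * w j * s = 0" for j
  proof -
    have "0 = (\<Sum>l\<in>UNIV. A$j$l * v$l)"
      using kernel by (simp add: matrix_vector_mult_def vec_eq_iff)
    also have "\<dots> = (\<Sum>l\<in>UNIV. (if j = l then d j * v$l else 0) + c * w j * (w l * v$l))"
      by (rule sum.cong) (auto simp: entries algebra_simps)
    also have "\<dots> = d j * v$j + c * w j * s"
      by (simp add: sum.distrib sum_distrib_left s_def)
    finally show ?thesis by simp
  qed
  have v_eq: "v$j = - (c * w j * s) / d j" for j
    using row[of j] d_nz[of j] by (simp add: field_simps add_eq_0_iff2)
  define S where "S = (\<Sum>j\<in>UNIV. (w j)^2 / d j)"
  have "s = (\<Sum>j\<in>UNIV. w j * v$j)"
    by (simp add: s_def)
  also have "\<dots> = (\<Sum>j\<in>UNIV. - (c * s) * ((w j)^2 / d j))"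
    by (rule sum.cong) (simp_all add: v_eq power2_eq_square)
  also have "\<dots> = - (c * s) * S"
    unfolding S_def by (rule sum_distrib_left[symmetric])
  finally have "s + c * s * S = 0"
    by (simp add: eq_neg_iff_add_eq_0)
  then have "s * (1 + c * S) = 0"
    by (simp add: algebra_simps)
  then have "s = 0"
    using nondeg by (simp add: S_def)
  then show "v = 0"
    by (simp add: vec_eq_iff v_eq)
qed

section \<open>The Hessian at a critical point\<close>

lemma prod_except_one:
  fixes X :: "'a::field^'n"
  assumes "\<forall>i. X$i \<noteq> 0"
  shows "(\<Prod>i\<in>UNIV-{l}. X$i) = (\<Prod>i\<in>UNIV. X$i) / X$l"
proof -
  have "(\<Prod>i\<in>UNIV. X$i) = X$l * (\<Prod>i\<in>UNIV-{l}. X$i)"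
    by (rule prod.remove) auto
  moreover have "X$l \<noteq> 0"
    using assms by simp
  ultimately show ?thesis
    by simp
qed

lemma prod_except_two:
  fixes X :: "'a::field^'n"
  assumes "\<forall>i. X$i \<noteq> 0" "j \<noteq> l"
  shows "(\<Prod>i\<in>UNIV-{l}-{j}. X$i) = (\<Prod>i\<in>UNIV. X$i) / (X$j * X$l)"
proof -
  have "(\<Prod>i\<in>UNIV-{l}. X$i) = X$j * (\<Prod>i\<in>UNIV-{l}-{j}. X$i)"
    by (rule prod.remove) (use assms in auto)
  moreover have "X$j \<noteq> 0" "X$l \<noteq> 0"
    using assms by simp_all
  ultimately show ?thesis
    using prod_except_one[OF assms(1), of l] by (simp add: field_simps)
qed

lemma critical_point_quadratic:
  assumes nz: "\<forall>i. X$i \<noteq> 0" and crit: "partial j W X = 0"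
  shows "(X$j)^2 + (\<Prod>i\<in>UNIV. X$i) * X$j - 1 = 0"
proof -
  let ?P = "\<Prod>i\<in>UNIV. X$i"
  have "1 - 1/(X$j)^2 + ?P / X$j = 0"
    using crit partial_W[of X j] nz prod_except_one[OF nz, of j] by simp
  moreover have "(X$j)^2 + ?P * X$j - 1 = (X$j)^2 * (1 - 1/(X$j)^2 + ?P / X$j)"
    using nz by (simp add: field_simps power2_eq_square)
  ultimately show ?thesis by simp
qed

text \<open>At a critical point the Hessian is \<open>diag((2 X_j + P)/X_j^2) + P w w^T\<close> with
  \<open>w_j = 1/X_j\<close>; on the diagonal this uses \<open>2/X_j^3 = (2 X_j + 2 P)/X_j^2\<close>, which is
  the critical point equation.\<close>
lemma hessian_W_critical:
  assumes nz: "\<forall>i. X$i \<noteq> 0"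
    and quad: "\<And>m. (X$m)^2 + (\<Prod>i\<in>UNIV. X$i) * X$m - 1 = 0"
  shows "hessian W X $ j $ l = (if j = l then (2 * X$j + (\<Prod>i\<in>UNIV. X$i)) / (X$j)^2 else 0)
           + (\<Prod>i\<in>UNIV. X$i) * (1 / X$j) * (1 / X$l)"
proof (cases "j = l")
  case True
  let ?P = "\<Prod>i\<in>UNIV. X$i"
  have "2 / (X$j)^3 = (2 * X$j + ?P) / (X$j)^2 + ?P / (X$j)^2"
  proof -
    have "2 = 2 * ((X$j)^2 + ?P * X$j - 1) + 2"
      using quad[of j] by simp
    then show ?thesis
      using nz by (simp add: field_simps power2_eq_square power3_eq_cube)
  qed
  then show ?thesis
    using True nz hessian_W_diag[of X j] by (simp add: power2_eq_square)
next
  case False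
  then show ?thesis
    using nz hessian_W_offdiag[of j l X] prod_except_two[of X j l] by simp
qed

section \<open>Arithmetic of the critical points\<close>

lemma completed_square:
  fixes x P :: "'a::comm_ring_1"
  assumes "x^2 + P * x - 1 = 0"
  shows "(2 * x + P)^2 = 4 + P^2"
proof -
  have "(2 * x + P)^2 = 4 * (x^2 + P * x - 1) + (4 + P^2)"
    by (simp add: power2_eq_square algebra_simps)
  then show ?thesis
    using assms by simp
qed

text \<open>The discriminant \<open>4 + P^2\<close> cannot vanish in even dimension: otherwise every
  coordinate is the double root \<open>-P/2\<close>, so \<open>P = (P^2/4)^k = (-1)^k\<close> and \<open>P^2 = 1 \<noteq> -4\<close>.\<close>
lemma discriminant_nonzero:
  fixes X :: "complex^'n"
  assumes n: "CARD('n) = 2 * k"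
    and quad: "\<And>j. (X$j)^2 + (\<Prod>i\<in>UNIV. X$i) * X$j - 1 = 0"
  shows "4 + (\<Prod>i\<in>UNIV. X$i)^2 \<noteq> 0"
proof
  define P where "P = (\<Prod>i\<in>UNIV. X$i)"
  assume "4 + (\<Prod>i\<in>UNIV. X$i)^2 = 0"
  then have P2: "P^2 = -4"
    by (simp add: P_def add_eq_0_iff)
  have double_root: "X$j = -P/2" for j
  proof -
    have "(2 * X$j + P)^2 = 0"
      using completed_square[OF quad[of j]] P2 by (simp add: P_def)
    then show ?thesis
      by (simp add: field_simps add_eq_0_iff2)
  qed
  have "P = (\<Prod>i\<in>UNIV. X$i)"
    by (simp add: P_def)
  also have "\<dots> = (\<Prod>i\<in>(UNIV::'n set). -P/2)"
    by (simp add: double_root)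
  also have "\<dots> = (-P/2)^(2 * k)"
    using n by simp
  also have "\<dots> = (-1)^k"
    by (simp add: power_mult power_divide P2)
  finally have "P^2 = 1"
    by (simp add: power_mult[symmetric] mult.commute)
  then show False
    using P2 by simp
qed

lemma square_roots_majority:
  fixes y :: "'n::finite \<Rightarrow> 'a::idom"
  assumes "\<And>j. (y j)^2 = D"
  obtains r where "r^2 = D" and "\<And>j. y j = r \<or> y j = -r"
    and "CARD('n) \<le> 2 * card {j. y j = r}"
proof -
  define r where "r = y undefined"
  have pm: "y j = r \<or> y j = -r" for j
  proof -
    have "(y j)^2 = r^2"
      using assms by (simp add: r_def)
    then show ?thesis
      by (simp add: power2_eq_iff)
  qed
  have "UNIV = {j. y j = r} \<union> {j. y j = -r}"
    using pm by auto
  then have total: "CARD('n) \<le> card {j. y j = r} + card {j. y j = -r}"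
    by (metis card_Un_le)
  have "r^2 = D"
    using assms by (simp add: r_def)
  show ?thesis
  proof (cases "card {j. y j = -r} \<le> card {j. y j = r}")
    case True
    then show ?thesis
      using that[of r] pm total \<open>r^2 = D\<close> by simp
  next
    case False
    have "y j = -r \<or> y j = -(-r)" for j
      using pm[of j] by auto
    then show ?thesis
      using that[of "-r"] False total \<open>r^2 = D\<close> by simp
  qed
qed

lemma sum_two_valued:
  fixes f :: "'n::finite \<Rightarrow> 'a::comm_ring_1"
  assumes "\<And>j. j \<in> A \<Longrightarrow> f j = a" and "\<And>j. j \<notin> A \<Longrightarrow> f j = b"
  shows "(\<Sum>j\<in>UNIV. f j) = of_nat (card A) * a + of_nat (CARD('n) - card A) * b"
proof -
  have "(\<Sum>j\<in>UNIV. f j) = (\<Sum>j\<in>UNIV \<inter> A. f j) + (\<Sum>j\<in>UNIV - A. f j)"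
    by (rule sum.Int_Diff) simp
  also have "\<dots> = (\<Sum>j\<in>A. a) + (\<Sum>j\<in>UNIV - A. b)"
    using assms by simp
  finally show ?thesis
    by (simp add: card_Diff_subset)
qed

lemma prod_two_valued:
  fixes f :: "'n::finite \<Rightarrow> 'a::comm_monoid_mult"
  assumes "\<And>j. j \<in> A \<Longrightarrow> f j = a" and "\<And>j. j \<notin> A \<Longrightarrow> f j = b"
  shows "(\<Prod>j\<in>UNIV. f j) = a ^ card A * b ^ (CARD('n) - card A)"
proof -
  have "(\<Prod>j\<in>UNIV. f j) = (\<Prod>j\<in>UNIV \<inter> A. f j) * (\<Prod>j\<in>UNIV - A. f j)"
    by (rule prod.Int_Diff) simp
  also have "\<dots> = (\<Prod>j\<in>A. a) * (\<Prod>j\<in>UNIV - A. b)"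
    using assms by simp
  finally show ?thesis
    by (simp add: card_Diff_subset)
qed

text \<open>The real inequality behind the final contradiction: for \<open>c = 2d \<ge> 2\<close>,
  \<open>((c+1)/(c-1))^c (c^2-1) \<ge> ((c+1)/(c-1))^2 (c^2-1) = (c+1)^3/(c-1) > 4\<close>.\<close>
lemma ratio_power_bound:
  fixes d :: nat
  assumes "d \<ge> 1"
  shows "((real (2*d) + 1) / (real (2*d) - 1))^(2*d) * (real (2*d)^2 - 1) > 4"
proof -
  define c where "c = real (2*d)"
  define q where "q = (c + 1) / (c - 1)"
  have c2: "c \<ge> 2"
    using assms by (simp add: c_def)
  have "q \<ge> 1"
    using c2 by (simp add: q_def field_simps)
  then have "q^2 \<le> q^(2*d)"
    using assms by (intro power_increasing) auto
  moreover have "q^2 * (c^2 - 1) = (c + 1)^3 / (c - 1)"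
  proof -
    have "q^2 * (c^2 - 1) = (c + 1)^2 * ((c + 1) * (c - 1)) / (c - 1)^2"
      by (simp add: q_def power_divide power2_eq_square algebra_simps)
    also have "\<dots> = (c + 1)^3 / (c - 1)"
      using c2 by (simp add: power2_eq_square power3_eq_cube)
    finally show ?thesis .
  qed
  moreover have "(c + 1)^3 / (c - 1) > 4"
  proof -
    have "(c + 1) * (c + 1) \<ge> 3 * 3"
      using c2 by (intro mult_mono) auto
    then have "(c + 1) * (c + 1) * (c + 1) \<ge> 9 * (c + 1)"
      using c2 by (intro mult_mono) auto
    then show ?thesis
      using c2 by (simp add: power3_eq_cube field_simps)
  qed
  moreover have "c^2 - 1 > 0"
  proof -
    have "c * c \<ge> 2 * 2"
      using c2 by (intro mult_mono) auto
    then show ?thesis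
      by (simp add: power2_eq_square)
  qed
  ultimately have "q^(2*d) * (c^2 - 1) > 4"
    by (smt (verit) mult_right_mono)
  then show ?thesis
    by (simp add: q_def c_def)
qed

text \<open>With \<open>c = 2d\<close>, suppose
  \<open>P^2 (c^2-1) = 4\<close> and \<open>P = \<alpha>^(k+d) \<beta>^(k-d)\<close> for the two roots
  \<open>\<alpha> = -(c+1)P/2\<close>, \<open>\<beta> = (c-1)P/2\<close>.  Then \<open>\<alpha>\<beta> = -1\<close> and \<open>\<alpha>^2 = (c+1)/(c-1)\<close>, so
  \<open>P^2 = (\<alpha>^2)^(2d)\<close>, and \<open>P^2 (c^2-1) = 4\<close> contradicts \<open>ratio_power_bound\<close>.\<close>
lemma two_valued_configuration_impossible:
  fixes P c :: complex and d k :: nat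
  assumes d: "1 \<le> d" "d \<le> k" and c: "c = of_nat (2*d)"
    and key: "P^2 * (c^2 - 1) = 4"
    and prod: "P = ((-c*P - P)/2)^(k+d) * ((c*P - P)/2)^(k-d)"
  shows False
proof -
  define \<alpha> where "\<alpha> = (-c*P - P)/2"
  define \<beta> where "\<beta> = (c*P - P)/2"
  have ab: "\<alpha> * \<beta> = -1"
  proof -
    have "\<alpha> * \<beta> = - (P^2 * (c^2 - 1)) / 4"
      by (simp add: \<alpha>_def \<beta>_def power2_eq_square algebra_simps)
    then show ?thesis
      using key by simp
  qed
  have "c \<noteq> 1"
  proof
    assume "c = 1"
    then have "2*d = 1"
      using c by (metis of_nat_1 of_nat_eq_iff)
    then show False
      by simp
  qed
  have a2: "\<alpha>^2 = (c + 1) / (c - 1)"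
  proof -
    have "\<alpha>^2 * (c - 1) = (P^2 * (c^2 - 1)) * (c + 1) / 4"
      by (simp add: \<alpha>_def power2_eq_square algebra_simps)
    then have "\<alpha>^2 * (c - 1) = c + 1"
      by (simp only: key) simp
    then show ?thesis
      using \<open>c \<noteq> 1\<close> by (simp add: field_simps)
  qed
  have "P^2 = (\<alpha>^2)^(2*d) * (\<alpha>*\<beta>)^(2*(k-d))"
  proof -
    have "P = \<alpha>^(k+d) * \<beta>^(k-d)"
      using prod by (simp add: \<alpha>_def \<beta>_def)
    then have "P^2 = \<alpha>^((k+d)*2) * \<beta>^((k-d)*2)"
      by (simp only: power_mult_distrib power_mult[symmetric])
    also have "(k+d)*2 = 2*(2*d) + (k-d)*2"
      using d by simp
    finally show ?thesis
      by (simp add: power_add power_mult_distrib mult.commute[of "k-d"] flip: power_mult)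
  qed
  also have "(\<alpha>*\<beta>)^(2*(k-d)) = 1"
    using ab by (simp add: power_mult)
  finally have "P^2 = (\<alpha>^2)^(2*d)"
    by simp
  then have "((c + 1) / (c - 1))^(2*d) * (c^2 - 1) = 4"
    using key a2 by simp
  then have "complex_of_real (((real (2*d) + 1) / (real (2*d) - 1))^(2*d) * (real (2*d)^2 - 1)) = 4"
    by (simp add: c)
  then have "((real (2*d) + 1) / (real (2*d) - 1))^(2*d) * (real (2*d)^2 - 1) = 4"
    by (metis of_real_eq_iff of_real_numeral)
  then show False
    using ratio_power_bound[OF d(1)] by simp
qed

text \<open>With \<open>y_j = 2X_j + P = \<plusminus>r\<close>,
  the majority sign \<open>r\<close> occurring \<open>k + d\<close> times, one gets \<open>\<Sum> 1/y_j = 2d/r\<close>; so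
  \<open>P \<Sum> 1/y_j = -1\<close> forces \<open>r = -2dP\<close>, \<open>d \<ge> 1\<close>, \<open>P^2 ((2d)^2 - 1) = r^2 - P^2 = 4\<close>, and
  the coordinates \<open>X_j = (y_j - P)/2\<close> form the impossible two-valued configuration.\<close>
lemma reciprocal_sum_ne_minus_one:
  fixes X :: "complex^'n"
  assumes n: "CARD('n) = 2 * k"
    and quad: "\<And>j. (X$j)^2 + (\<Prod>i\<in>UNIV. X$i) * X$j - 1 = 0"
  shows "(\<Prod>i\<in>UNIV. X$i) * (\<Sum>j\<in>UNIV. 1 / (2 * X$j + (\<Prod>i\<in>UNIV. X$i))) \<noteq> -1"
proof
  define P where "P = (\<Prod>i\<in>UNIV. X$i)"
  define y where "y j = 2 * X$j + P" for j
  assume "(\<Prod>i\<in>UNIV. X$i) * (\<Sum>j\<in>UNIV. 1 / (2 * X$j + (\<Prod>i\<in>UNIV. X$i))) = -1"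
  then have sum_eq: "P * (\<Sum>j\<in>UNIV. 1 / y j) = -1"
    by (simp add: P_def y_def)
  have y_sq: "(y j)^2 = 4 + P^2" for j
    using completed_square[OF quad[of j]] by (simp add: y_def P_def)
  obtain r where r_sq: "r^2 = 4 + P^2" and y_pm: "\<And>j. y j = r \<or> y j = -r"
    and majority: "CARD('n) \<le> 2 * card {j. y j = r}"
    using square_roots_majority[of y, OF y_sq] by blast
  have r_nz: "r \<noteq> 0"
    using r_sq discriminant_nonzero[OF n quad] by (auto simp: P_def)
  define A where "A = {j. y j = r}"
  define d where "d = card A - k"
  have "card A \<le> 2 * k"
    using n card_mono[of UNIV A] by simp
  then have card_A: "card A = k + d" and "d \<le> k"
    using majority n by (auto simp: d_def A_def)
  define c :: complex where "c = of_nat (2*d)"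
  have "(\<Sum>j\<in>UNIV. 1 / y j) = of_nat (k + d) * (1 / r) + of_nat (k - d) * (- (1 / r))"
    using sum_two_valued[of A "\<lambda>j. 1 / y j" "1 / r" "- (1 / r)"] y_pm card_A n
    by (force simp: A_def)
  also have "\<dots> = c / r"
    using \<open>d \<le> k\<close> r_nz by (simp add: c_def of_nat_diff field_simps)
  finally have "P * (c / r) = -1"
    using sum_eq by simp
  then have r_eq: "r = - c * P"
    using r_nz by (simp add: field_simps)
  have "d \<ge> 1"
    using r_eq r_nz by (cases d) (auto simp: c_def)
  have key: "P^2 * (c^2 - 1) = 4"
    using r_sq r_eq by (simp add: power2_eq_square algebra_simps)
  have "P = ((-c*P - P)/2)^(k+d) * ((c*P - P)/2)^(k-d)"
  proof -
    have coordinate: "X$j = (y j - P) / 2" for j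
      by (simp add: y_def)
    have "P = (\<Prod>j\<in>UNIV. X$j)"
      by (simp add: P_def)
    also have "\<dots> = (\<Prod>j\<in>UNIV. (y j - P) / 2)"
      by (intro prod.cong refl coordinate)
    also have "\<dots> = ((-c*P - P)/2)^(k+d) * ((c*P - P)/2)^(k-d)"
      using prod_two_valued[of A "\<lambda>j. (y j - P) / 2" "(-c*P - P)/2" "(c*P - P)/2"]
        y_pm r_eq card_A n by (force simp: A_def)
    finally show ?thesis .
  qed
  then show False
    using two_valued_configuration_impossible[OF \<open>d \<ge> 1\<close> \<open>d \<le> k\<close> c_def key] by simp
qed

text \<open>At a critical point the Hessian is \<open>diag(y_j/X_j^2) + P w w^T\<close>; the diagonal is
  invertible since \<open>y_j^2 = 4 + P^2 \<noteq> 0\<close>, and the rank-one condition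
  \<open>1 + P \<Sum> 1/y_j \<noteq> 0\<close> is \<open>reciprocal_sum_ne_minus_one\<close>.  (The hypothesis \<open>k \<ge> 1\<close> is
  automatic, as index types are non-empty.)\<close>
theorem mainTheorem7:
  fixes k :: nat and X :: "complex^'n"
  assumes "k \<ge> 1" and "CARD('n) = 2 * k"
    and "\<forall>j. X$j \<noteq> 0"
    and "\<forall>j. partial j W X = 0"
  shows "invertible (hessian W X)"
proof -
  define P where "P = (\<Prod>i\<in>UNIV. X$i)"
  have quad: "(X$j)^2 + P * X$j - 1 = 0" for j
    using critical_point_quadratic[OF assms(3)] assms(4) by (simp add: P_def)
  have y_nz: "2 * X$j + P \<noteq> 0" for j
    using completed_square[OF quad[of j]] discriminant_nonzero[OF assms(2) quad[unfolded P_def]]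
    by (auto simp: P_def)
  have "(\<Sum>j\<in>UNIV. (1 / X$j)^2 / ((2 * X$j + P) / (X$j)^2)) = (\<Sum>j\<in>UNIV. 1 / (2 * X$j + P))"
    using assms(3) by (intro sum.cong) (simp_all add: power2_eq_square)
  then have "1 + P * (\<Sum>j\<in>UNIV. (1 / X$j)^2 / ((2 * X$j + P) / (X$j)^2)) \<noteq> 0"
    using reciprocal_sum_ne_minus_one[OF assms(2) quad[unfolded P_def]]
    by (simp add: P_def add_eq_0_iff)
  then show ?thesis
    using invertible_diagonal_plus_rank_one[of "hessian W X" "\<lambda>j. (2 * X$j + P) / (X$j)^2" P
            "\<lambda>j. 1 / X$j"]
      hessian_W_critical[OF assms(3) quad[unfolded P_def]] y_nz assms(3)
    by (simp add: P_def)
qed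

end
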